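(* Let $\mu>0$, $\tau>0$, $\alpha\in(0,1)$, and let $G_\alpha(t)$ be the relaxation modulus of the Andrade model, i.e. the function whose Laplace transform is $$\tilde G_\alpha(s)=\frac{\mu\,\tau}{s\,\tau+\Gamma(\alpha+1)(s\,\tau)^{1-\alpha}+1}.$$ Then $\lim_{t\to0^+}G_\alpha(t)=\mu$ and, as $t\to0^+$, $$G_\alpha(t)\approx\mu\left[1-\left(\frac{t}{\tau}\right)^{\alpha}\right].$$
   Context: Here $\approx$ denotes the leading-order asymptotic behaviour as $t\to0^+$ (up to terms of lower order than $(t/\tau)^\alpha$). Background: in the Andrade model the creep compliance is $J_\alpha(t)=\frac{1}{\mu}\left[1+(t/\tau)^\alpha+t/\tau\right]$ and the relaxation modulus satisfies $\tilde J_\alpha(s)\tilde G_\alpha(s)=1/s^2$, equivalently the Volterra equation $G_\alpha(t)=\mu-\frac{1}{\tau}\int_0^t\left[1+\alpha\left(\frac{t-x}{\tau}\right)^{\alpha-1}\right]G_\alpha(x)\,dx$. *)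

theory Defs
  imports "HOL-Analysis.Analysis" "HOL-Library.Landau_Symbols"
begin

definition has_laplace :: "(real \<Rightarrow> real) \<Rightarrow> real \<Rightarrow> real \<Rightarrow> bool" where
  "has_laplace G s L \<longleftrightarrow>
     (\<lambda>t. exp (- s * t) * G t) absolutely_integrable_on {0<..} \<and>
     ((\<lambda>t. exp (- s * t) * G t) has_integral L) {0<..}"

end

theory Submission
  imports Defs "HOL-Real_Asymp.Real_Asymp"
begin

text \<open>
  The prescribed transform is \<open>\<mu>\<close> times \<open>1 / (s + a s\<^sup>1\<^sup>-\<^sup>\<alpha> + b)\<close> with
  \<open>a = \<Gamma>(\<alpha> + 1) \<tau>\<^sup>-\<^sup>\<alpha>\<close> and \<open>b = 1 / \<tau>\<close>. For large \<open>s\<close> this is the geometric series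
  \<open>\<Sum>\<^sub>n (-1)\<^sup>n r(s)\<^sup>n / s\<close> in \<open>r(s) = a s\<^sup>-\<^sup>\<alpha> + b / s\<close>; expanding \<open>r(s)\<^sup>n\<close> binomially
  and inverting \<open>s\<^sup>-\<^sup>\<beta>\<^sup>-\<^sup>1\<close>, the transform of \<open>t\<^sup>\<beta> / \<Gamma>(\<beta> + 1)\<close>, term by term gives
  an explicit series \<open>H\<close>. Bounding \<open>t\<^sup>\<beta> / \<Gamma>(\<beta> + 1)\<close> uniformly in \<open>\<beta>\<close> shows that it
  converges for all \<open>t > 0\<close>, has the right transform, and equals
  \<open>1 - (t/\<tau>)\<^sup>\<alpha> - t/\<tau> + O(t\<^sup>2\<^sup>\<alpha>)\<close> as \<open>t \<rightarrow> 0\<close>. Lerch's uniqueness theorem, proved by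
  Stone--Weierstrass approximation in the variable \<open>exp (- t)\<close>, identifies the continuous
  function \<open>G\<close> with \<open>\<mu> H\<close>.
\<close>

section \<open>Laplace transforms\<close>

lemma has_laplace_cmult:
  assumes "has_laplace f s L"
  shows "has_laplace (\<lambda>t. c * f t) s (c * L)"
proof -
  have "(\<lambda>t. c * (exp (- s * t) * f t)) absolutely_integrable_on {0<..}"
    using assms by (intro set_integrable_mult_right) (simp add: has_laplace_def)
  moreover have "((\<lambda>t. c * (exp (- s * t) * f t)) has_integral c * L) {0<..}"
    using assms by (intro has_integral_mult_right) (simp add: has_laplace_def)
  ultimately show ?thesis
    by (simp add: has_laplace_def mult.left_commute)
qed

lemma has_laplace_diff:
  assumes "has_laplace f s L" and "has_laplace g s M"
  shows "has_laplace (\<lambda>t. f t - g t) s (L - M)"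
proof -
  have "(\<lambda>t. exp (- s * t) * f t - exp (- s * t) * g t) absolutely_integrable_on {0<..}"
    using assms by (intro set_integral_diff(1)) (simp_all add: has_laplace_def)
  moreover have "((\<lambda>t. exp (- s * t) * f t - exp (- s * t) * g t) has_integral L - M) {0<..}"
    using assms by (intro has_integral_diff) (simp_all add: has_laplace_def)
  ultimately show ?thesis
    by (simp add: has_laplace_def right_diff_distrib)
qed

lemma has_laplace_sum:
  assumes "finite I" and "\<And>i. i \<in> I \<Longrightarrow> has_laplace (f i) s (L i)"
  shows "has_laplace (\<lambda>t. \<Sum>i\<in>I. f i t) s (\<Sum>i\<in>I. L i)"
  using assms absolutely_integrable_sum[where f = "\<lambda>i t. exp (- s * t) * f i t"]
    has_integral_sum[where f = "\<lambda>i t. exp (- s * t) * f i t"]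
  by (simp add: has_laplace_def sum_distrib_left)

lemma Gamma_integral_real_greaterThan:
  assumes "x > (0::real)"
  shows "((\<lambda>t. t powr (x - 1) / exp t) has_integral Gamma x) {0<..}"
proof -
  have "((\<lambda>t. t powr (x - 1) / exp t) has_integral Gamma x) {0..}"
    by (rule Gamma_integral_real) fact
  then have "((\<lambda>t. if t \<in> {0<..} then t powr (x - 1) / exp t else 0) has_integral Gamma x) {0..}"
    by (rule has_integral_spike [of "{0}", rotated 2]) auto
  then show ?thesis
    by (subst (asm) has_integral_restrict) auto
qed

lemma has_laplace_powr:
  fixes \<beta> s :: real
  assumes "\<beta> > -1" and "s > 0"
  shows "has_laplace (\<lambda>t. t powr \<beta>) s (Gamma (\<beta> + 1) / s powr (\<beta> + 1))"
proof -
  define f where "f t = t powr \<beta> / exp t" for t :: real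
  have f: "(f has_integral Gamma (\<beta> + 1)) {0<..}"
    using Gamma_integral_real_greaterThan[of "\<beta> + 1"] assms by (simp add: f_def[abs_def])
  have "(\<lambda>x. s * x) ` {0<..} = {0<..}"
  proof (intro set_eqI iffI)
    fix y :: real assume "y \<in> {0<..}"
    then show "y \<in> (\<lambda>x. s * x) ` {0<..}"
      using assms by (intro image_eqI[of _ _ "y / s"]) auto
  qed (use assms in auto)
  moreover have "f absolutely_integrable_on {0<..}"
    using f by (intro nonnegative_absolutely_integrable_1) (auto simp: f_def)
  ultimately have "(\<lambda>t. \<bar>s\<bar> * f (s * t)) absolutely_integrable_on {0<..} \<and>
      integral {0<..} (\<lambda>t. \<bar>s\<bar> * f (s * t)) = Gamma (\<beta> + 1)"
    using has_absolute_integral_change_of_variables_1'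
        [of "{0<..}" "\<lambda>t. s * t" "\<lambda>_. s" f "Gamma (\<beta> + 1)"] f assms
    by (auto intro!: derivative_eq_intros simp: inj_on_def has_integral_iff)
  then have "((\<lambda>t. s * f (s * t)) has_integral Gamma (\<beta> + 1)) {0<..}"
    using assms by (simp add: has_integral_iff absolutely_integrable_on_def)
  then have "((\<lambda>t. 1 / s powr (\<beta> + 1) * (s * f (s * t))) has_integral
      1 / s powr (\<beta> + 1) * Gamma (\<beta> + 1)) {0<..}"
    by (rule has_integral_mult_right)
  moreover have "1 / s powr (\<beta> + 1) * (s * f (s * t)) = exp (- s * t) * t powr \<beta>" if "t > 0" for t
  proof -
    have "s * f (s * t) = s powr (\<beta> + 1) * (exp (- s * t) * t powr \<beta>)"
      using that assms by (simp add: f_def powr_mult powr_add exp_minus divide_inverse)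
    then show ?thesis
      using assms by simp
  qed
  ultimately have
    "((\<lambda>t. exp (- s * t) * t powr \<beta>) has_integral Gamma (\<beta> + 1) / s powr (\<beta> + 1)) {0<..}"
    by (subst (asm) has_integral_cong) simp_all
  moreover from this have "(\<lambda>t. exp (- s * t) * t powr \<beta>) absolutely_integrable_on {0<..}"
    by (intro nonnegative_absolutely_integrable_1 has_integral_integrable) simp_all
  ultimately show ?thesis
    by (simp add: has_laplace_def)
qed

lemma integrable_exp_neg_greaterThan:
  fixes c :: real
  assumes "c > 0"
  shows "(\<lambda>t. exp (- c * t)) integrable_on {0<..}"
proof (rule integrable_spike_set)
  show "(\<lambda>t. exp (- c * t)) integrable_on {0..}"
    using assms by (intro integrable_on_exp_minus_to_infinity)
  show "negligible {t \<in> {0..} - {0<..}. exp (- c * t) \<noteq> 0}"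
    by (rule negligible_subset[OF negligible_sing[of 0]]) auto
  show "negligible {t \<in> {0<..} - {0..}. exp (- c * t) \<noteq> 0}"
    by (rule negligible_subset[OF negligible_empty]) auto
qed

section \<open>Uniqueness of the Laplace transform\<close>

lemma integral_continuous_nonneg_pos:
  fixes F :: "real \<Rightarrow> real"
  assumes "open S" and "continuous_on S F" and "F integrable_on S"
    and "\<And>t. t \<in> S \<Longrightarrow> F t \<ge> 0" and "t0 \<in> S" and "F t0 > 0"
  shows "integral S F > 0"
proof -
  obtain e where e: "e > 0" "cball t0 e \<subseteq> S"
    using assms(1,5) open_contains_cball by blast
  define I where "I = {t0 - e..t0 + e}"
  have I: "I \<subseteq> S" "t0 \<in> I" "box (t0 - e) (t0 + e) \<noteq> {}"
    using e by (auto simp: I_def cball_eq_atLeastAtMost)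
  have cont: "continuous_on I F"
    using assms(2) I(1) by (rule continuous_on_subset)
  have nonneg: "\<And>t. t \<in> I \<Longrightarrow> F t \<ge> 0"
    using I(1) assms(4) by blast
  have int: "F integrable_on I"
    using cont unfolding I_def by (rule integrable_continuous_interval)
  have "integral I F \<noteq> 0"
  proof
    assume "integral I F = 0"
    then have "F t0 = 0"
      using integral_cbox_eq_0_iff[of "t0 - e" "t0 + e" F] cont I(2,3) nonneg
      unfolding I_def cbox_interval by blast
    with assms(6) show False
      by simp
  qed
  moreover have "integral I F \<ge> 0"
    using int nonneg by (rule integral_nonneg)
  moreover have "integral I F \<le> integral S F"
    using I(1) int assms(3,4) by (intro integral_subset_le) auto
  ultimately show ?thesis
    by linarith
qed

lemma real_eq_0_if_le_eps_mult:
  fixes x A :: real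
  assumes "A \<ge> 0" and "\<And>\<epsilon>. \<epsilon> > 0 \<Longrightarrow> \<bar>x\<bar> \<le> \<epsilon> * A"
  shows "x = 0"
proof (rule ccontr)
  assume "x \<noteq> 0"
  then have "\<bar>x\<bar> \<le> \<bar>x\<bar> / (A + 1) * A"
    using assms by (intro assms(2)) (simp add: add_nonneg_pos)
  also have "\<dots> < \<bar>x\<bar>"
    using \<open>x \<noteq> 0\<close> assms(1) by (simp add: field_simps)
  finally show False
    by simp
qed

lemma has_integral_poly_exp_zero:
  fixes D :: "real \<Rightarrow> real"
  assumes "\<And>n::nat. ((\<lambda>t. exp (- (a + real n) * t) * D t) has_integral 0) {0<..}"
  shows "((\<lambda>t. (\<Sum>i\<le>m. c i * exp (- t) ^ i) * (exp (- a * t) * D t)) has_integral 0) {0<..}"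
proof -
  have shift: "c i * exp (- t) ^ i * (exp (- a * t) * D t) =
      c i * (exp (- (a + real i) * t) * D t)" for t i
    by (simp add: exp_of_nat_mult[symmetric] mult_exp_exp algebra_simps)
  then have "(\<Sum>i\<le>m. c i * exp (- t) ^ i) * (exp (- a * t) * D t) =
      (\<Sum>i\<le>m. c i * (exp (- (a + real i) * t) * D t))" for t
    unfolding sum_distrib_right using shift by (intro sum.cong) auto
  moreover have "((\<lambda>t. \<Sum>i\<le>m. c i * (exp (- (a + real i) * t) * D t)) has_integral 0) {0<..}"
    using has_integral_sum[of "{..m}" "\<lambda>i t. c i * (exp (- (a + real i) * t) * D t)" "\<lambda>_. 0"]
      has_integral_mult_right[OF assms] by simp
  ultimately show ?thesis
    by simp
qed

lemma absolutely_integrable_comp_exp_mult: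
  fixes W \<psi> :: "real \<Rightarrow> real"
  assumes "continuous_on {0..1} \<psi>" and "W absolutely_integrable_on {0<..}"
  shows "(\<lambda>t. \<psi> (exp (- t)) * W t) absolutely_integrable_on {0<..}"
proof (rule absolutely_integrable_bounded_measurable_product_real[OF _ _ _ assms(2)])
  have exp_range: "exp (- t) \<in> {0..1}" if "t \<in> {0<..}" for t :: real
    using that by auto
  have "continuous_on {0<..} (\<lambda>t. \<psi> (exp (- t)))"
    by (rule continuous_on_compose2[OF assms(1)]) (auto intro!: continuous_intros)
  then show "(\<lambda>t. \<psi> (exp (- t))) \<in> borel_measurable (lebesgue_on {0<..})"
    by (rule continuous_imp_measurable_on_sets_lebesgue) simp
  obtain B where B: "\<forall>x\<in>{0..1}. \<bar>\<psi> x\<bar> \<le> B"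
    using compact_imp_bounded[OF compact_continuous_image[OF assms(1)]] unfolding bounded_iff by auto
  then show "bounded ((\<lambda>t. \<psi> (exp (- t))) ` {0<..})"
    unfolding bounded_iff using exp_range by (intro exI[of _ B]) auto
qed simp

lemma has_integral_comp_exp_zero:
  fixes D \<psi> :: "real \<Rightarrow> real"
  assumes abs_int: "(\<lambda>t. exp (- a * t) * D t) absolutely_integrable_on {0<..}"
    and vanish: "\<And>n::nat. ((\<lambda>t. exp (- (a + real n) * t) * D t) has_integral 0) {0<..}"
    and \<psi>: "continuous_on {0..1} \<psi>"
  shows "((\<lambda>t. \<psi> (exp (- t)) * (exp (- a * t) * D t)) has_integral 0) {0<..}"
proof -
  define W where "W t = exp (- a * t) * D t" for t
  define F where "F t = \<psi> (exp (- t)) * W t" for t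
  have F_int: "F integrable_on {0<..}"
    using absolutely_integrable_comp_exp_mult[OF \<psi> abs_int]
    by (simp add: F_def[abs_def] W_def absolutely_integrable_on_def)
  define A where "A = integral {0<..} (\<lambda>t. \<bar>W t\<bar>)"
  have absW_int: "(\<lambda>t. \<bar>W t\<bar>) integrable_on {0<..}"
    using abs_int by (simp add: absolutely_integrable_on_def W_def)
  have bound: "norm (integral {0<..} F) \<le> \<epsilon> * A" if \<epsilon>: "\<epsilon> > 0" for \<epsilon>
  proof -
    obtain g where g: "real_polynomial_function g" "\<And>x. x \<in> {0..1} \<Longrightarrow> \<bar>\<psi> x - g x\<bar> < \<epsilon>"
      using Stone_Weierstrass_real_polynomial_function[OF compact_Icc \<psi> \<epsilon>] by blast
    then obtain c m where g_sum: "g = (\<lambda>x. \<Sum>i\<le>m. c i * x ^ i)"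
      using real_polynomial_function_iff_sum by metis
    have g_zero: "((\<lambda>t. g (exp (- t)) * W t) has_integral 0) {0<..}"
      unfolding W_def g_sum by (rule has_integral_poly_exp_zero[OF vanish])
    then have "integral {0<..} F = integral {0<..} (\<lambda>t. F t - g (exp (- t)) * W t)"
      using F_int by (simp add: integral_diff has_integral_iff)
    also have "norm \<dots> \<le> integral {0<..} (\<lambda>t. \<epsilon> * \<bar>W t\<bar>)"
    proof (rule integral_norm_bound_integral)
      show "(\<lambda>t. F t - g (exp (- t)) * W t) integrable_on {0<..}"
        using F_int g_zero by (intro integrable_diff) (auto simp: has_integral_iff)
      show "(\<lambda>t. \<epsilon> * \<bar>W t\<bar>) integrable_on {0<..}"
        using absW_int by (rule integrable_on_mult_right)
      fix t :: real assume "t \<in> {0<..}"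
      then have "\<bar>\<psi> (exp (- t)) - g (exp (- t))\<bar> \<le> \<epsilon>"
        using g(2)[of "exp (- t)"] by simp
      then show "norm (F t - g (exp (- t)) * W t) \<le> \<epsilon> * \<bar>W t\<bar>"
        unfolding F_def left_diff_distrib[symmetric] real_norm_def abs_mult
        by (rule mult_right_mono) simp
    qed
    also have "\<dots> = \<epsilon> * A"
      by (simp add: A_def)
    finally show ?thesis .
  qed
  have "A \<ge> 0"
    unfolding A_def using absW_int by (rule integral_nonneg) simp
  then have "integral {0<..} F = 0"
    by (rule real_eq_0_if_le_eps_mult) (use bound in simp)
  with F_int show ?thesis
    by (simp add: F_def[abs_def] W_def has_integral_iff)
qed

lemma exp_neighbourhood_same_sign:
  fixes D :: "real \<Rightarrow> real"
  assumes "continuous_on {0<..} D" and "t0 > 0" and "D t0 \<noteq> 0"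
  obtains r where "r > 0" and "\<And>t. \<bar>exp (- t) - exp (- t0)\<bar> < r \<Longrightarrow> D t0 * D t > 0"
proof -
  define x0 where "x0 = exp (- t0)"
  have "D t0 * D t0 > 0"
    using assms(3) not_real_square_gt_zero by blast
  then have pos_x0: "D t0 * D (- ln x0) > 0"
    by (simp add: x0_def)
  have "isCont D t0"
    using assms(1,2) by (simp add: continuous_on_eq_continuous_at)
  then have "isCont (\<lambda>x. D t0 * D (- ln x)) x0"
    by (intro continuous_intros isCont_o2[where f = "\<lambda>x. - ln x" and g = D]) (simp_all add: x0_def)
  then have "\<exists>r>0. \<forall>x. x \<noteq> x0 \<and> \<bar>x0 - x\<bar> < r \<longrightarrow> D t0 * D (- ln x) > 0"
    unfolding isCont_def using pos_x0 by (rule LIM_fun_gt_zero)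
  then obtain r where "r > 0"
    and near: "\<forall>x. x \<noteq> x0 \<and> \<bar>x0 - x\<bar> < r \<longrightarrow> D t0 * D (- ln x) > 0"
    by blast
  moreover have "D t0 * D t > 0" if "\<bar>exp (- t) - x0\<bar> < r" for t
    using near[rule_format, of "exp (- t)"] pos_x0 that
    by (cases "exp (- t) = x0") (auto simp: abs_minus_commute x0_def)
  ultimately show ?thesis
    using that unfolding x0_def by blast
qed

text \<open>Lerch's theorem. \<open>D\<close> is tested against a tent function in the variable
  \<open>exp (- t)\<close>, centred at \<open>exp (- t0)\<close> and so narrow that, multiplied by \<open>D t0\<close>,
  the integrand is nonnegative.\<close>
lemma laplace_vanishing_imp_zero:
  fixes D :: "real \<Rightarrow> real"
  assumes cont: "continuous_on {0<..} D"
    and abs_int: "(\<lambda>t. exp (- a * t) * D t) absolutely_integrable_on {0<..}"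
    and vanish: "\<And>n::nat. ((\<lambda>t. exp (- (a + real n) * t) * D t) has_integral 0) {0<..}"
    and t0: "t0 > 0"
  shows "D t0 = 0"
proof (rule ccontr)
  assume "D t0 \<noteq> 0"
  then have square_pos: "D t0 * D t0 > 0"
    using not_real_square_gt_zero by blast
  from \<open>D t0 \<noteq> 0\<close> obtain r where r_pos: "r > 0"
    and same_sign: "\<And>t. \<bar>exp (- t) - exp (- t0)\<bar> < r \<Longrightarrow> D t0 * D t > 0"
    using exp_neighbourhood_same_sign[OF cont t0] by blast
  define F where "F t = D t0 * max 0 (r - \<bar>exp (- t) - exp (- t0)\<bar>) * (exp (- a * t) * D t)" for t
  have F_zero: "(F has_integral 0) {0<..}"
    unfolding F_def[abs_def]
    by (rule has_integral_comp_exp_zero[OF abs_int vanish])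
      (intro continuous_intros)
  have F_eq: "F t = max 0 (r - \<bar>exp (- t) - exp (- t0)\<bar>) * exp (- a * t) * (D t0 * D t)" for t
    by (simp add: F_def mult_ac)
  have "F t \<ge> 0" for t
    using same_sign[of t] unfolding F_eq by (cases "\<bar>exp (- t) - exp (- t0)\<bar> < r") auto
  moreover have "F t0 > 0"
    using r_pos square_pos unfolding F_eq by simp
  moreover have "continuous_on {0<..} F"
    unfolding F_def by (intro continuous_intros cont)
  ultimately have "integral {0<..} F > 0"
    using t0 F_zero by (intro integral_continuous_nonneg_pos) (auto simp: has_integral_iff)
  with F_zero show False
    by (simp add: has_integral_iff)
qed

lemma has_laplace_unique:
  fixes F G :: "real \<Rightarrow> real"
  assumes "continuous_on {0<..} F" and "continuous_on {0<..} G"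
    and "\<And>s. s > a \<Longrightarrow> has_laplace F s (L s)" and "\<And>s. s > a \<Longrightarrow> has_laplace G s (L s)"
    and "t > 0"
  shows "F t = G t"
proof -
  have diff: "has_laplace (\<lambda>t. F t - G t) s 0" if "s > a" for s
    using has_laplace_diff[OF assms(3,4)[OF that]] by simp
  have "F t - G t = 0"
  proof (rule laplace_vanishing_imp_zero[where a = "a + 1" and D = "\<lambda>t. F t - G t"])
    show "continuous_on {0<..} (\<lambda>t. F t - G t)"
      using assms(1,2) by (intro continuous_intros)
    show "(\<lambda>t. exp (- (a + 1) * t) * (F t - G t)) absolutely_integrable_on {0<..}"
      using diff[of "a + 1"] by (simp add: has_laplace_def)
    show "((\<lambda>t. exp (- (a + 1 + real n) * t) * (F t - G t)) has_integral 0) {0<..}" for n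
      using diff[of "a + 1 + real n"] by (simp add: has_laplace_def)
  qed (rule assms(5))
  then show ?thesis
    by simp
qed

section \<open>The series solution\<close>

lemma powr_mult_exp_le_Gamma:
  fixes y \<beta> :: real
  assumes "y > 0" and "\<beta> \<ge> 0"
  shows "y powr \<beta> * exp (- y) \<le> exp 1 * Gamma (\<beta> + 1)"
proof -
  let ?f = "\<lambda>t::real. t powr \<beta> / exp t"
  have f_int: "?f integrable_on {y..y + 1}"
    using assms by (intro integrable_continuous_interval continuous_intros) auto
  have "y powr \<beta> * exp (- y - 1) = integral {y..y + 1} (\<lambda>_. y powr \<beta> * exp (- y - 1))"
    by simp
  also have "\<dots> \<le> integral {y..y + 1} ?f"
  proof (rule integral_le[OF _ f_int])
    fix t assume t: "t \<in> {y..y + 1}"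
    have "y powr \<beta> * exp (- y - 1) \<le> t powr \<beta> * exp (- t)"
      using t assms by (intro mult_mono powr_mono2) auto
    then show "y powr \<beta> * exp (- y - 1) \<le> ?f t"
      by (simp add: exp_minus field_simps)
  qed (simp add: integrable_on_const)
  also have "\<dots> \<le> integral {0..} ?f"
    using assms f_int Gamma_integral_real[of "\<beta> + 1"]
    by (intro integral_subset_le) (auto simp: has_integral_iff)
  also have "\<dots> = Gamma (\<beta> + 1)"
    using Gamma_integral_real[of "\<beta> + 1"] assms by (simp add: has_integral_iff)
  finally show ?thesis
    by (simp add: exp_diff exp_minus field_simps)
qed

lemma powr_div_Gamma_le:
  fixes t \<sigma> \<beta> :: real
  assumes "t > 0" and "\<sigma> > 0" and "\<beta> \<ge> 0"
  shows "t powr \<beta> / Gamma (\<beta> + 1) \<le> exp 1 * exp (\<sigma> * t) * \<sigma> powr (- \<beta>)"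
proof -
  have "Gamma (\<beta> + 1) > 0"
    using assms by (intro Gamma_real_pos) auto
  moreover have "(\<sigma> * t) powr \<beta> * exp (- (\<sigma> * t)) \<le> exp 1 * Gamma (\<beta> + 1)"
    using assms by (intro powr_mult_exp_le_Gamma) auto
  ultimately show ?thesis
    using assms by (simp add: powr_mult powr_minus exp_minus field_simps)
qed

locale andrade_series =
  fixes a b \<alpha> \<sigma> :: real
  assumes a_pos: "a > 0" and b_pos: "b > 0" and alpha_pos: "\<alpha> > 0" and alpha_le_one: "\<alpha> \<le> 1"
    and sigma_pos: "\<sigma> > 0" and ratio_sigma_le: "a * \<sigma> powr (- \<alpha>) + b / \<sigma> \<le> 1 / 2"
begin

definition ratio :: "real \<Rightarrow> real" where
  "ratio s = a * s powr (- \<alpha>) + b / s"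

definition weight :: "nat \<Rightarrow> nat \<Rightarrow> real" where
  "weight n k = real (n choose k) * a ^ k * b ^ (n - k)"

definition exponent :: "nat \<Rightarrow> nat \<Rightarrow> real" where
  "exponent n k = \<alpha> * real k + real (n - k)"

definition H_term :: "nat \<Rightarrow> real \<Rightarrow> real" where
  "H_term n t = (-1) ^ n * (\<Sum>k\<le>n. weight n k * (t powr exponent n k / Gamma (exponent n k + 1)))"

definition H :: "real \<Rightarrow> real" where
  "H t = (\<Sum>n. H_term n t)"

lemma weight_nonneg: "weight n k \<ge> 0"
  using a_pos b_pos by (simp add: weight_def)

lemma exponent_nonneg: "exponent n k \<ge> 0"
  using alpha_pos by (simp add: exponent_def)

lemma Gamma_exponent_pos: "Gamma (exponent n k + 1) > 0"
  using exponent_nonneg[of n k] by (intro Gamma_real_pos) simp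

lemma ratio_power:
  assumes "x > 0"
  shows "ratio x ^ n = (\<Sum>k\<le>n. weight n k * x powr (- exponent n k))"
proof -
  have "x powr (- exponent n k) = (x powr (- \<alpha>)) ^ k * (1 / x) ^ (n - k)" if "k \<le> n" for k
    using assms that
    by (simp add: exponent_def powr_add powr_minus powr_realpow[symmetric] powr_powr[symmetric]
        field_simps powr_diff)
  then show ?thesis
    unfolding ratio_def binomial_ring weight_def
    by (intro sum.cong refl) (simp add: power_mult_distrib power_divide field_simps)
qed

lemma ratio_pos: "x > 0 \<Longrightarrow> ratio x > 0"
  using a_pos b_pos by (simp add: ratio_def add_pos_pos)

lemma ratio_antimono: "0 < x \<Longrightarrow> x \<le> y \<Longrightarrow> ratio y \<le> ratio x"
  unfolding ratio_def using a_pos b_pos alpha_pos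
  by (intro add_mono mult_left_mono powr_mono2' divide_left_mono) auto

lemma ratio_sigma: "0 < ratio \<sigma>" "ratio \<sigma> \<le> 1 / 2"
  using ratio_pos sigma_pos ratio_sigma_le by (auto simp: ratio_def)

lemma abs_H_term_le:
  assumes "\<And>k. k \<le> n \<Longrightarrow>
      t powr exponent n k / Gamma (exponent n k + 1) \<le> M * \<sigma> powr (- exponent n k)"
  shows "\<bar>H_term n t\<bar> \<le> M * ratio \<sigma> ^ n"
proof -
  have "\<bar>H_term n t\<bar> = (\<Sum>k\<le>n. weight n k * (t powr exponent n k / Gamma (exponent n k + 1)))"
    using weight_nonneg Gamma_exponent_pos
    by (simp add: H_term_def abs_mult less_imp_le sum_nonneg abs_of_nonneg)
  also have "\<dots> \<le> (\<Sum>k\<le>n. weight n k * (M * \<sigma> powr (- exponent n k)))"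
    using weight_nonneg assms by (intro sum_mono mult_left_mono) auto
  also have "\<dots> = M * ratio \<sigma> ^ n"
    using sigma_pos by (simp add: ratio_power sum_distrib_left mult_ac)
  finally show ?thesis .
qed

lemma abs_H_term_le_exp:
  assumes "t > 0"
  shows "\<bar>H_term n t\<bar> \<le> exp 1 * exp (\<sigma> * t) * ratio \<sigma> ^ n"
  using assms sigma_pos exponent_nonneg by (intro abs_H_term_le powr_div_Gamma_le) auto

lemma abs_H_term_le_small:
  assumes "0 < t" and "t \<le> 1" and "n \<ge> 2"
  shows "\<bar>H_term n t\<bar> \<le> exp 1 * exp \<sigma> * t powr (2 * \<alpha>) * ratio \<sigma> ^ n"
proof (rule abs_H_term_le)
  fix k assume "k \<le> n"
  have "2 * \<alpha> \<le> \<alpha> * real n"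
    using assms(3) alpha_pos by simp
  also have "\<dots> \<le> exponent n k"
    using \<open>k \<le> n\<close> alpha_le_one alpha_pos mult_left_le_one_le[of "real (n - k)" \<alpha>]
    by (simp add: exponent_def of_nat_diff algebra_simps)
  finally have "t powr exponent n k \<le> t powr (2 * \<alpha>)"
    using assms(1,2) by (intro powr_mono') auto
  moreover have "1 / Gamma (exponent n k + 1) \<le> exp 1 * exp \<sigma> * \<sigma> powr (- exponent n k)"
    using powr_div_Gamma_le[of 1 \<sigma> "exponent n k"] sigma_pos exponent_nonneg by simp
  ultimately have "t powr exponent n k * (1 / Gamma (exponent n k + 1)) \<le>
      t powr (2 * \<alpha>) * (exp 1 * exp \<sigma> * \<sigma> powr (- exponent n k))"
    using Gamma_exponent_pos[of n k] by (intro mult_mono) auto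
  then show "t powr exponent n k / Gamma (exponent n k + 1) \<le>
      exp 1 * exp \<sigma> * t powr (2 * \<alpha>) * \<sigma> powr (- exponent n k)"
    by (simp add: mult_ac)
qed

lemma H_term_0: "t > 0 \<Longrightarrow> H_term 0 t = 1"
  by (simp add: H_term_def weight_def exponent_def)

lemma H_term_1: "t > 0 \<Longrightarrow> H_term 1 t = - (b * t + a * t powr \<alpha> / Gamma (\<alpha> + 1))"
  using Gamma_fact[of 1, where 'a = real]
  by (simp add: H_term_def weight_def exponent_def add.commute)

lemma geometrically_dominated:
  assumes "\<And>n. \<bar>f n\<bar> \<le> C * ratio \<sigma> ^ n"
  shows "summable f" and "\<bar>\<Sum>n<N. f n\<bar> \<le> 2 * C" and "\<bar>\<Sum>n. f n\<bar> \<le> 2 * C"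
proof -
  have "(\<lambda>n. ratio \<sigma> ^ n) sums (1 / (1 - ratio \<sigma>))"
    using ratio_sigma by (intro geometric_sums) simp
  then have C_sums: "(\<lambda>n. C * ratio \<sigma> ^ n) sums (C * (1 / (1 - ratio \<sigma>)))"
    by (rule sums_mult)
  have "C \<ge> 0"
    using assms[of 0] by simp
  moreover have "1 / (1 - ratio \<sigma>) \<le> 2"
    using ratio_sigma by (simp add: field_simps)
  ultimately have "(\<Sum>n. C * ratio \<sigma> ^ n) \<le> 2 * C"
    using C_sums mult_left_mono[of "1 / (1 - ratio \<sigma>)" 2 C] by (simp add: sums_iff mult.commute)
  have summable_C: "summable (\<lambda>n. C * ratio \<sigma> ^ n)"
    using C_sums by (rule sums_summable)
  show "summable f"
    by (rule summable_comparison_test'[OF summable_C]) (simp add: assms)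
  have "\<bar>\<Sum>n. f n\<bar> \<le> (\<Sum>n. C * ratio \<sigma> ^ n)"
    using norm_suminf_le[of f, OF _ summable_C] assms by simp
  with \<open>(\<Sum>n. C * ratio \<sigma> ^ n) \<le> 2 * C\<close> show "\<bar>\<Sum>n. f n\<bar> \<le> 2 * C"
    by linarith
  have "\<bar>\<Sum>n<N. f n\<bar> \<le> (\<Sum>n<N. C * ratio \<sigma> ^ n)"
    by (rule order_trans[OF sum_abs sum_mono]) (rule assms)
  also have "\<dots> \<le> (\<Sum>n. C * ratio \<sigma> ^ n)"
    using summable_C \<open>C \<ge> 0\<close> ratio_sigma by (intro sum_le_suminf) simp_all
  finally show "\<bar>\<Sum>n<N. f n\<bar> \<le> 2 * C"
    using \<open>(\<Sum>n. C * ratio \<sigma> ^ n) \<le> 2 * C\<close> by linarith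
qed

lemma summable_H_term: "t > 0 \<Longrightarrow> summable (\<lambda>n. H_term n t)"
  using abs_H_term_le_exp by (rule geometrically_dominated)

lemma abs_partial_H_le: "t > 0 \<Longrightarrow> \<bar>\<Sum>n<N. H_term n t\<bar> \<le> 2 * (exp 1 * exp (\<sigma> * t))"
  using abs_H_term_le_exp by (rule geometrically_dominated)

lemma continuous_on_H: "continuous_on {0<..} H"
proof -
  have "continuous_on {0<..<T} H" for T
  proof (rule uniform_limit_theorem)
    show "uniform_limit {0<..<T} (\<lambda>N t. \<Sum>n<N. H_term n t) H sequentially"
      unfolding H_def[abs_def]
    proof (rule Weierstrass_m_test)
      show "summable (\<lambda>n. exp 1 * exp (\<sigma> * T) * ratio \<sigma> ^ n)"
        using ratio_sigma by (intro summable_mult summable_geometric) auto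
      fix n t assume "t \<in> {0<..<T}"
      then have "\<bar>H_term n t\<bar> \<le> exp 1 * exp (\<sigma> * t) * ratio \<sigma> ^ n"
        by (intro abs_H_term_le_exp) auto
      also have "\<dots> \<le> exp 1 * exp (\<sigma> * T) * ratio \<sigma> ^ n"
        using \<open>t \<in> {0<..<T}\<close> sigma_pos ratio_sigma by (intro mult_right_mono) auto
      finally show "norm (H_term n t) \<le> exp 1 * exp (\<sigma> * T) * ratio \<sigma> ^ n"
        by simp
    qed
    have "continuous_on {0<..<T} (H_term n)" for n
      using Gamma_exponent_pos unfolding H_term_def
      by (intro continuous_intros) (auto simp: less_imp_neq[symmetric])
    then show "\<forall>\<^sub>F N in sequentially. continuous_on {0<..<T} (\<lambda>t. \<Sum>n<N. H_term n t)"
      by (intro always_eventually allI continuous_on_sum) auto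
  qed simp
  then have "isCont H t" if "t > 0" for t
    using that continuous_on_eq_continuous_at[of "{0<..<t + 1}" H] by auto
  then show ?thesis
    by (intro continuous_at_imp_continuous_on) auto
qed

lemma has_laplace_H_term:
  assumes "s > 0"
  shows "has_laplace (H_term n) s ((-1) ^ n / s * ratio s ^ n)"
proof -
  define c where "c k = (-1) ^ n * weight n k / Gamma (exponent n k + 1)" for k
  have "has_laplace (\<lambda>t. \<Sum>k\<le>n. c k * t powr exponent n k) s
      (\<Sum>k\<le>n. c k * (Gamma (exponent n k + 1) / s powr (exponent n k + 1)))"
    using assms exponent_nonneg[of n] by (intro has_laplace_sum has_laplace_cmult has_laplace_powr)
      (auto intro: less_le_trans[of "-1" 0])
  moreover have "(\<lambda>t. \<Sum>k\<le>n. c k * t powr exponent n k) = H_term n"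
    by (auto simp: fun_eq_iff H_term_def c_def sum_distrib_left mult_ac)
  moreover have "c k * (Gamma (exponent n k + 1) / s powr (exponent n k + 1)) =
      (-1) ^ n / s * (weight n k * s powr (- exponent n k))" for k
    using assms Gamma_exponent_pos[of n k] by (simp add: c_def powr_add powr_minus field_simps)
  ultimately show ?thesis
    using assms by (simp add: ratio_power sum_distrib_left)
qed

lemma H_term_transforms_sums:
  assumes "s \<ge> \<sigma>"
  shows "(\<lambda>n. (-1) ^ n / s * ratio s ^ n) sums (1 / (s + a * s powr (1 - \<alpha>) + b))"
proof -
  have "s > 0"
    using assms sigma_pos by linarith
  have "ratio s \<le> ratio \<sigma>"
    by (rule ratio_antimono[OF sigma_pos assms])
  then have "norm (- ratio s) < 1"
    using ratio_pos[OF \<open>s > 0\<close>] ratio_sigma by simp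
  then have "(\<lambda>n. (- ratio s) ^ n) sums (1 / (1 - - ratio s))"
    by (rule geometric_sums)
  then have geom: "(\<lambda>n. 1 / s * (- ratio s) ^ n) sums (1 / s * (1 / (1 - - ratio s)))"
    by (rule sums_mult)
  have "s powr (1 - \<alpha>) = s * s powr (- \<alpha>)"
    using \<open>s > 0\<close> powr_add[of s 1 "- \<alpha>"] by simp
  moreover have "s * (1 + ratio s) = s + a * (s * s powr (- \<alpha>)) + b"
    using \<open>s > 0\<close> by (simp add: ratio_def distrib_left mult.left_commute)
  ultimately have "s * (1 + ratio s) = s + a * s powr (1 - \<alpha>) + b"
    by (simp only:)
  then have "1 / s * (1 / (1 - - ratio s)) = 1 / (s + a * s powr (1 - \<alpha>) + b)"
    by simp
  moreover have "(\<lambda>n. 1 / s * (- ratio s) ^ n) = (\<lambda>n. (-1) ^ n / s * ratio s ^ n)"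
    by (rule ext, subst power_minus) simp
  ultimately show ?thesis
    using geom by simp
qed

lemma has_laplace_H:
  assumes "s > \<sigma>"
  shows "has_laplace H s (1 / (s + a * s powr (1 - \<alpha>) + b))"
proof -
  have "s > 0"
    using assms sigma_pos by simp
  define f where "f N t = exp (- s * t) * (\<Sum>n<N. H_term n t)" for N t
  define h where "h t = 2 * exp 1 * exp (- (s - \<sigma>) * t)" for t
  have "(\<lambda>t. exp (- (s - \<sigma>) * t)) integrable_on {0<..}"
    using assms by (intro integrable_exp_neg_greaterThan) simp
  then have h_int: "h integrable_on {0<..}"
    unfolding h_def by (intro integrable_on_mult_right)
  have f_int: "(f N has_integral (\<Sum>n<N. (-1) ^ n / s * ratio s ^ n)) {0<..}" for N
    using has_laplace_sum[of "{..<N}" "\<lambda>n. H_term n", OF _ has_laplace_H_term[OF \<open>s > 0\<close>]]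
    by (simp add: has_laplace_def f_def[abs_def])
  have f_le: "norm (f N t) \<le> h t" if "t \<in> {0<..}" for N t
  proof -
    have "norm (f N t) \<le> exp (- s * t) * (2 * (exp 1 * exp (\<sigma> * t)))"
      using abs_partial_H_le[of t N] that by (simp add: f_def abs_mult)
    also have "\<dots> = h t"
      by (simp add: h_def mult_exp_exp algebra_simps)
    finally show ?thesis .
  qed
  have f_lim: "(\<lambda>N. f N t) \<longlonglongrightarrow> exp (- s * t) * H t" if "t \<in> {0<..}" for t
    unfolding f_def H_def using that summable_H_term
    by (intro tendsto_mult_left summable_LIMSEQ) simp
  have H_int: "(\<lambda>t. exp (- s * t) * H t) integrable_on {0<..}" and
    lim: "(\<lambda>N. integral {0<..} (f N)) \<longlonglongrightarrow> integral {0<..} (\<lambda>t. exp (- s * t) * H t)"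
    using dominated_convergence[of f "{0<..}" h "\<lambda>t. exp (- s * t) * H t"] f_int h_int f_le f_lim
    by (auto simp: has_integral_iff)
  have "(\<lambda>N. integral {0<..} (f N)) \<longlonglongrightarrow> 1 / (s + a * s powr (1 - \<alpha>) + b)"
    using f_int H_term_transforms_sums[of s] assms by (simp add: has_integral_iff sums_def)
  with lim have "integral {0<..} (\<lambda>t. exp (- s * t) * H t) = 1 / (s + a * s powr (1 - \<alpha>) + b)"
    by (rule LIMSEQ_unique)
  moreover have "norm (exp (- s * t) * H t) \<le> h t" if "t \<in> {0<..}" for t
    using tendsto_norm[OF f_lim[OF that]] by (rule tendsto_upperbound) (use f_le[OF that] in auto)
  then have "(\<lambda>t. exp (- s * t) * H t) absolutely_integrable_on {0<..}"
    using H_int h_int by (rule absolutely_integrable_integrable_bound)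
  ultimately show ?thesis
    using H_int by (simp add: has_laplace_def has_integral_iff)
qed

lemma H_expansion:
  "(\<lambda>t. H t - (1 - b * t - a * t powr \<alpha> / Gamma (\<alpha> + 1))) \<in> O[at_right 0](\<lambda>t. t powr (2 * \<alpha>))"
proof (rule bigoI)
  have "eventually (\<lambda>t. 0 < t \<and> t \<le> 1) (at_right (0::real))"
    by (rule eventually_at_rightI[of 0 1]) auto
  then show "\<forall>\<^sub>F t in at_right 0. norm (H t - (1 - b * t - a * t powr \<alpha> / Gamma (\<alpha> + 1)))
      \<le> 2 * exp 1 * exp \<sigma> * norm (t powr (2 * \<alpha>))"
  proof eventually_elim
    case (elim t)
    then have "H t = (\<Sum>n. H_term (n + 2) t) + (\<Sum>n<2. H_term n t)"
      unfolding H_def by (intro suminf_split_initial_segment summable_H_term) simp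
    moreover have "(\<Sum>n<2. H_term n t) = 1 - b * t - a * t powr \<alpha> / Gamma (\<alpha> + 1)"
      using elim H_term_0[of t] H_term_1[of t] by (simp add: numeral_2_eq_2)
    moreover have "\<bar>\<Sum>n. H_term (n + 2) t\<bar> \<le> 2 * (exp 1 * exp \<sigma> * t powr (2 * \<alpha>))"
    proof (rule geometrically_dominated(3))
      fix n
      have "\<bar>H_term (n + 2) t\<bar> \<le> exp 1 * exp \<sigma> * t powr (2 * \<alpha>) * ratio \<sigma> ^ (n + 2)"
        using elim by (intro abs_H_term_le_small) auto
      also have "\<dots> \<le> exp 1 * exp \<sigma> * t powr (2 * \<alpha>) * ratio \<sigma> ^ n"
        using ratio_sigma by (intro mult_left_mono power_decreasing) auto
      finally show "\<bar>H_term (n + 2) t\<bar> \<le> exp 1 * exp \<sigma> * t powr (2 * \<alpha>) * ratio \<sigma> ^ n" .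
    qed
    ultimately show ?case
      by (simp add: mult_ac)
  qed
qed

lemma has_laplace_imp_eq_H:
  assumes "continuous_on {0<..} G"
    and "\<And>s. s > \<sigma> \<Longrightarrow> has_laplace G s (c / (s + a * s powr (1 - \<alpha>) + b))"
    and "t > 0"
  shows "G t = c * H t"
proof (rule has_laplace_unique[where G = "\<lambda>t. c * H t" and a = \<sigma>,
      OF assms(1) _ assms(2) _ assms(3)])
  show "continuous_on {0<..} (\<lambda>t. c * H t)"
    by (intro continuous_intros continuous_on_H)
  show "has_laplace (\<lambda>t. c * H t) s (c / (s + a * s powr (1 - \<alpha>) + b))" if "s > \<sigma>" for s
    using has_laplace_cmult[OF has_laplace_H[OF that], of c] by simp
qed

lemma H_asymptotics:
  assumes "\<alpha> < 1" and "\<tau> > 0" and "a = Gamma (\<alpha> + 1) * \<tau> powr (- \<alpha>)"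
  shows "(\<lambda>t. H t - (1 - (t / \<tau>) powr \<alpha>)) \<in> o[at_right 0](\<lambda>t. (t / \<tau>) powr \<alpha>)"
proof -
  have "Gamma (\<alpha> + 1) > 0"
    using alpha_pos by (intro Gamma_real_pos) simp
  then have scale: "a * t powr \<alpha> / Gamma (\<alpha> + 1) = (t / \<tau>) powr \<alpha>" if "t > 0" for t
    using that assms(2,3) by (simp add: powr_divide powr_minus_divide)
  have "(\<lambda>t. H t - (1 - b * t - a * t powr \<alpha> / Gamma (\<alpha> + 1)))
      \<in> o[at_right 0](\<lambda>t. (t / \<tau>) powr \<alpha>)"
    using H_expansion by (rule landau_o.big_small_trans) (use alpha_pos assms(2) in real_asymp)
  moreover have "(\<lambda>t. b * t) \<in> o[at_right 0](\<lambda>t. (t / \<tau>) powr \<alpha>)"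
    using assms(1,2) alpha_pos b_pos by real_asymp
  ultimately have R: "(\<lambda>t. (H t - (1 - b * t - a * t powr \<alpha> / Gamma (\<alpha> + 1))) - b * t)
      \<in> o[at_right 0](\<lambda>t. (t / \<tau>) powr \<alpha>)"
    by (rule sum_in_smallo)
  have eq: "\<forall>\<^sub>F t in at_right 0.
      (H t - (1 - b * t - a * t powr \<alpha> / Gamma (\<alpha> + 1))) - b * t = H t - (1 - (t / \<tau>) powr \<alpha>)"
    using eventually_at_right_less[of 0] by eventually_elim (simp add: scale)
  show ?thesis
    using R unfolding landau_o.small.in_cong[OF eq] .
qed

end

lemma andrade_series_exists:
  fixes a b \<alpha> :: real
  assumes "a > 0" and "b > 0" and "0 < \<alpha>" and "\<alpha> \<le> 1"
  shows "\<exists>\<sigma>. andrade_series a b \<alpha> \<sigma>"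
proof -
  have "((\<lambda>\<sigma>. a * \<sigma> powr (- \<alpha>) + b / \<sigma>) \<longlongrightarrow> 0) at_top"
    using assms
    by (intro tendsto_add_zero tendsto_mult_right_zero tendsto_neg_powr
        tendsto_divide_0[OF tendsto_const] filterlim_ident filterlim_at_top_imp_at_infinity) auto
  then have "eventually (\<lambda>\<sigma>. a * \<sigma> powr (- \<alpha>) + b / \<sigma> < 1 / 2) at_top"
    by (rule order_tendstoD) simp
  moreover have "eventually (\<lambda>\<sigma>. \<sigma> > (0::real)) at_top"
    by (rule eventually_gt_at_top)
  ultimately have "eventually (\<lambda>\<sigma>. \<sigma> > 0 \<and> a * \<sigma> powr (- \<alpha>) + b / \<sigma> < 1 / 2) at_top"
    by (rule eventually_conj[rotated])
  then obtain \<sigma> where "\<sigma> > 0" and "a * \<sigma> powr (- \<alpha>) + b / \<sigma> < 1 / 2"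
    unfolding eventually_at_top_linorder by auto
  with assms show ?thesis
    by (intro exI[of _ \<sigma>]) (unfold_locales, auto)
qed

lemma andrade_transform_eq:
  fixes \<mu> \<tau> \<alpha> s :: real
  assumes "\<tau> > 0" and "s > 0"
  shows "\<mu> * \<tau> / (s * \<tau> + Gamma (\<alpha> + 1) * (s * \<tau>) powr (1 - \<alpha>) + 1) =
    \<mu> * (1 / (s + Gamma (\<alpha> + 1) * \<tau> powr (- \<alpha>) * s powr (1 - \<alpha>) + 1 / \<tau>))"
proof -
  have "(s * \<tau>) powr (1 - \<alpha>) = \<tau> * (s powr (1 - \<alpha>) * \<tau> powr (- \<alpha>))"
    using assms powr_add[of \<tau> 1 "- \<alpha>"] by (simp add: powr_mult)
  then have "s * \<tau> + Gamma (\<alpha> + 1) * (s * \<tau>) powr (1 - \<alpha>) + 1 =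
      \<tau> * (s + Gamma (\<alpha> + 1) * \<tau> powr (- \<alpha>) * s powr (1 - \<alpha>) + 1 / \<tau>)"
    using assms by (simp add: algebra_simps)
  then show ?thesis
    using assms by simp
qed

theorem mainTheorem3:
  fixes \<mu> \<tau> \<alpha> :: real and G :: "real \<Rightarrow> real"
  assumes "\<mu> > 0" and "\<tau> > 0" and "0 < \<alpha>" and "\<alpha> < 1"
    and "continuous_on {0<..} G"
    and "\<And>s. s > 0 \<Longrightarrow>
           has_laplace G s (\<mu> * \<tau> / (s * \<tau> + Gamma (\<alpha> + 1) * (s * \<tau>) powr (1 - \<alpha>) + 1))"
  shows "(G \<longlongrightarrow> \<mu>) (at_right 0) \<and>
      (\<lambda>t. G t - \<mu> * (1 - (t / \<tau>) powr \<alpha>)) \<in> o[at_right 0](\<lambda>t. (t / \<tau>) powr \<alpha>)"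
proof -
  define a where "a = Gamma (\<alpha> + 1) * \<tau> powr (- \<alpha>)"
  have "a > 0"
    using assms(2,3) Gamma_real_pos[of "\<alpha> + 1"] by (simp add: a_def)
  then obtain \<sigma> where "andrade_series a (1 / \<tau>) \<alpha> \<sigma>"
    using andrade_series_exists[of a "1 / \<tau>" \<alpha>] assms(2-4) by auto
  then interpret andrade_series a "1 / \<tau>" \<alpha> \<sigma> .
  have G_eq: "G t = \<mu> * H t" if "t > 0" for t
  proof (rule has_laplace_imp_eq_H[OF assms(5) _ that])
    show "has_laplace G s (\<mu> / (s + a * s powr (1 - \<alpha>) + 1 / \<tau>))" if "s > \<sigma>" for s
      using assms(6)[of s] andrade_transform_eq[OF assms(2), of s \<mu> \<alpha>] sigma_pos that
      by (simp add: a_def)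
  qed
  have "\<forall>\<^sub>F t in at_right 0.
      \<mu> * (H t - (1 - (t / \<tau>) powr \<alpha>)) = G t - \<mu> * (1 - (t / \<tau>) powr \<alpha>)"
    using eventually_at_right_less[of 0] by eventually_elim (simp add: G_eq right_diff_distrib)
  then have remainder:
    "(\<lambda>t. G t - \<mu> * (1 - (t / \<tau>) powr \<alpha>)) \<in> o[at_right 0](\<lambda>t. (t / \<tau>) powr \<alpha>)"
    using H_asymptotics[OF assms(4,2) a_def] assms(1) landau_o.small.in_cong by fastforce
  have "((\<lambda>t. \<mu> * (1 - (t / \<tau>) powr \<alpha>)) \<longlongrightarrow> \<mu>) (at_right 0)"
    using assms(2,3) by real_asymp
  moreover have "(\<lambda>t. G t - \<mu> * (1 - (t / \<tau>) powr \<alpha>)) \<in> o[at_right 0](\<lambda>t. \<mu> * (1 - (t / \<tau>) powr \<alpha>))"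
    using remainder by (rule landau_o.small_trans) (use assms(1-3) in real_asymp)
  ultimately have "((\<lambda>t. \<mu> * (1 - (t / \<tau>) powr \<alpha>) + (G t - \<mu> * (1 - (t / \<tau>) powr \<alpha>))) \<longlongrightarrow> \<mu>) (at_right 0)"
    by (rule tendsto_add_smallo)
  with remainder show ?thesis
    by simp
qed

end
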